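(* Let $G$ be a finite simple connected graph with at least two vertices and diameter $D$. The following are equivalent: (1) $G$ is distance degree regular. (2) For every function $g:\{1,\dots,D\}\to\mathbb{R}$ and every $A\subseteq V(G)$ with $|A|>0$, $$E_g(A)-E_g(V(G)\setminus A)=\left(\frac{2|A|}{|V(G)|}-1\right)E_g(V(G)).$$ (3) For every function $g:\{1,\dots,D\}\to\mathbb{R}$, the complement of every minimizer of $E_g$ is a minimizer of $E_g$. (4) There exists a function $g:\{1,\dots,D\}\to\mathbb{R}$ such that $\{g(1),\dots,g(D)\}$ is linearly independent over $\mathbb{Q}$ and the complement of every minimizer of $E_g$ is a minimizer of $E_g$. Moreover, the equivalence remains true if in both (3) and (4) the word "minimizer" is replaced throughout by "local minimizer", or throughout by "maximizer", or throughout by "local maximizer".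
   Context: $d(u,v)$ is shortest-path distance in $G$. For $g:\{1,\dots,D\}\to\mathbb{R}$ and $A\subseteq V(G)$, $E_g(A)=\sum_{\{u,v\}\subseteq A,u\ne v}g(d(u,v))$ over unordered pairs ($E_g(A)=0$ if $|A|\le1$). For $F$ a real function on subsets of $V(G)$: $A$ is a minimizer (maximizer) of $F$ if $F(A)$ is the minimum (maximum) of $F(B)$ over all $B\subseteq V(G)$ with $|B|=|A|$. A perturbation of $A$ is a set $(A\setminus\{u\})\cup\{v\}$ with $u\in A$, $v\notin A$ and $uv$ an edge; $A$ is a local minimizer (maximizer) of $F$ if $F(A)$ equals the minimum (maximum) of $F(B)$ over all perturbations $B$ of $A$. The distance vector $\vec D(u)$ of a vertex $u$ is the non-decreasingly sorted tuple of distances from $u$ to all other vertices; $G$ is distance degree regular if $\vec D(u)=\vec D(v)$ for all vertices $u,v$ (equivalently, for each $i$, all vertices have the same number of vertices at distance $i$). *)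

theory Defs
  imports Complex_Main "HOL-Library.Multiset"
begin

definition simple_graph :: "'a set \<Rightarrow> ('a \<Rightarrow> 'a \<Rightarrow> bool) \<Rightarrow> bool" where
  "simple_graph V E \<longleftrightarrow> finite V \<and> (\<forall>u v. E u v \<longrightarrow> u \<in> V \<and> v \<in> V)
     \<and> (\<forall>u v. E u v \<longrightarrow> E v u) \<and> (\<forall>u. \<not> E u u)"

inductive walk :: "('a \<Rightarrow> 'a \<Rightarrow> bool) \<Rightarrow> 'a \<Rightarrow> 'a \<Rightarrow> nat \<Rightarrow> bool" for E where
  walk_nil: "walk E u u 0"
| walk_step: "E u w \<Longrightarrow> walk E w v n \<Longrightarrow> walk E u v (Suc n)"

definition connected_graph :: "'a set \<Rightarrow> ('a \<Rightarrow> 'a \<Rightarrow> bool) \<Rightarrow> bool" where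
  "connected_graph V E \<longleftrightarrow> (\<forall>u\<in>V. \<forall>v\<in>V. \<exists>n. walk E u v n)"

definition gdist :: "('a \<Rightarrow> 'a \<Rightarrow> bool) \<Rightarrow> 'a \<Rightarrow> 'a \<Rightarrow> nat" where
  "gdist E u v = (LEAST n. walk E u v n)"

definition diameter :: "'a set \<Rightarrow> ('a \<Rightarrow> 'a \<Rightarrow> bool) \<Rightarrow> nat" where
  "diameter V E = Max {gdist E u v | u v. u \<in> V \<and> v \<in> V}"

text \<open>E_g(A): sum of g(d(u,v)) over unordered pairs of distinct vertices of A
(each unordered pair counted once = half of the sum over ordered pairs).\<close>
definition energy :: "('a \<Rightarrow> 'a \<Rightarrow> bool) \<Rightarrow> (nat \<Rightarrow> real) \<Rightarrow> 'a set \<Rightarrow> real" where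
  "energy E g A = (\<Sum>u\<in>A. \<Sum>v\<in>A - {u}. g (gdist E u v)) / 2"

definition is_minimizer :: "'a set \<Rightarrow> ('a \<Rightarrow> 'a \<Rightarrow> bool) \<Rightarrow> ('a set \<Rightarrow> real) \<Rightarrow> 'a set \<Rightarrow> bool" where
  "is_minimizer V E F A \<longleftrightarrow> A \<subseteq> V \<and> (\<forall>B. B \<subseteq> V \<and> card B = card A \<longrightarrow> F A \<le> F B)"

definition is_maximizer :: "'a set \<Rightarrow> ('a \<Rightarrow> 'a \<Rightarrow> bool) \<Rightarrow> ('a set \<Rightarrow> real) \<Rightarrow> 'a set \<Rightarrow> bool" where
  "is_maximizer V E F A \<longleftrightarrow> A \<subseteq> V \<and> (\<forall>B. B \<subseteq> V \<and> card B = card A \<longrightarrow> F B \<le> F A)"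

definition perturbations :: "'a set \<Rightarrow> ('a \<Rightarrow> 'a \<Rightarrow> bool) \<Rightarrow> 'a set \<Rightarrow> 'a set set" where
  "perturbations V E A = {(A - {u}) \<union> {v} | u v. u \<in> A \<and> v \<in> V - A \<and> E u v}"

definition is_local_minimizer :: "'a set \<Rightarrow> ('a \<Rightarrow> 'a \<Rightarrow> bool) \<Rightarrow> ('a set \<Rightarrow> real) \<Rightarrow> 'a set \<Rightarrow> bool" where
  "is_local_minimizer V E F A \<longleftrightarrow> A \<subseteq> V \<and> (\<forall>B\<in>perturbations V E A. F A \<le> F B)"

definition is_local_maximizer :: "'a set \<Rightarrow> ('a \<Rightarrow> 'a \<Rightarrow> bool) \<Rightarrow> ('a set \<Rightarrow> real) \<Rightarrow> 'a set \<Rightarrow> bool" where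
  "is_local_maximizer V E F A \<longleftrightarrow> A \<subseteq> V \<and> (\<forall>B\<in>perturbations V E A. F B \<le> F A)"

definition distance_vector :: "'a set \<Rightarrow> ('a \<Rightarrow> 'a \<Rightarrow> bool) \<Rightarrow> 'a \<Rightarrow> nat list" where
  "distance_vector V E u = sorted_list_of_multiset (image_mset (gdist E u) (mset_set (V - {u})))"

definition distance_degree_regular :: "'a set \<Rightarrow> ('a \<Rightarrow> 'a \<Rightarrow> bool) \<Rightarrow> bool" where
  "distance_degree_regular V E \<longleftrightarrow> (\<forall>u\<in>V. \<forall>v\<in>V. distance_vector V E u = distance_vector V E v)"

text \<open>g(1),...,g(D) linearly independent over the rationals (as a family).\<close>
definition rat_lin_indep :: "nat \<Rightarrow> (nat \<Rightarrow> real) \<Rightarrow> bool" where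
  "rat_lin_indep D g \<longleftrightarrow> (\<forall>c :: nat \<Rightarrow> real. (\<forall>i\<in>{1..D}. c i \<in> \<rat>) \<longrightarrow>
      (\<Sum>i=1..D. c i * g i) = 0 \<longrightarrow> (\<forall>i\<in>{1..D}. c i = 0))"

end

theory Submission
  imports Defs "HOL-Analysis.Continuum_Not_Denumerable" "HOL-Analysis.Finite_Cartesian_Product"
begin

text \<open>Let the transmission of a vertex be \<open>t\<^sub>g(u) = \<Sum>\<^bsub>v \<noteq> u\<^esub> g(d(u,v))\<close>. Double counting gives
  \<open>2 (E\<^sub>g(A) - E\<^sub>g(V - A)) = \<Sum>\<^bsub>u \<in> A\<^esub> t\<^sub>g(u) - \<Sum>\<^bsub>u \<in> V - A\<^esub> t\<^sub>g(u)\<close>, so the complement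
  identity holds as soon as \<open>t\<^sub>g\<close> is constant; then \<open>E\<^sub>g(V - A) - E\<^sub>g(A)\<close> depends only on \<open>|A|\<close>,
  and complements of (local) optimizers are (local) optimizers. Conversely, singletons are trivially
  optimal, hence so is every \<open>V - {u}\<close>; comparing these sets (along edges, for local optimality)
  shows that \<open>E\<^sub>g(V - {u}) = E\<^sub>g(V) - t\<^sub>g(u)\<close> does not depend on \<open>u\<close>. Finally
  \<open>t\<^sub>g(u) = \<Sum>\<^sub>i g(i) \<cdot> |S\<^sub>i(u)|\<close> with \<open>S\<^sub>i(u)\<close> the sphere of radius \<open>i\<close>, so constant transmission
  for all indicator functions \<open>g\<close>, or for a single \<open>\<rat>\<close>-linearly independent \<open>g\<close>, makes the
  sphere sizes independent of \<open>u\<close>.\<close>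

lemma simple_graph_finite: "simple_graph V E \<Longrightarrow> finite V"
  by (simp add: simple_graph_def)

lemma simple_graph_sym: "simple_graph V E \<Longrightarrow> E u v \<Longrightarrow> E v u"
  by (simp add: simple_graph_def)

lemma simple_graph_edge_in: "simple_graph V E \<Longrightarrow> E u v \<Longrightarrow> u \<in> V \<and> v \<in> V"
  by (simp add: simple_graph_def)

lemma walk_snoc: "walk E u v n \<Longrightarrow> E v w \<Longrightarrow> walk E u w (Suc n)"
  by (induction rule: walk.induct) (auto intro: walk.intros)

lemma walk_sym:
  assumes "\<And>x y. E x y \<Longrightarrow> E y x"
  shows "walk E u v n \<Longrightarrow> walk E v u n"
  by (induction rule: walk.induct) (auto intro: walk.intros walk_snoc assms)

lemma walk_invariant:
  assumes "\<And>x y. E x y \<Longrightarrow> \<phi> x = \<phi> y"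
  shows "walk E u v n \<Longrightarrow> \<phi> u = \<phi> v"
  by (induction rule: walk.induct) (simp_all add: assms)

lemma connected_graph_invariant:
  assumes "connected_graph V E" and "\<And>x y. E x y \<Longrightarrow> \<phi> x = \<phi> y" and "u \<in> V" "w \<in> V"
  shows "\<phi> u = \<phi> w"
  using assms walk_invariant[of E \<phi>] unfolding connected_graph_def by blast

lemma gdist_sym:
  assumes "simple_graph V E"
  shows "gdist E u v = gdist E v u"
proof -
  have "walk E u v = walk E v u"
    using walk_sym[of E] simple_graph_sym[OF assms] by blast
  then show ?thesis unfolding gdist_def by simp
qed

lemma walk_gdist: "connected_graph V E \<Longrightarrow> u \<in> V \<Longrightarrow> v \<in> V \<Longrightarrow> walk E u v (gdist E u v)"
  unfolding connected_graph_def gdist_def by (metis LeastI)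

lemma gdist_ge_1:
  assumes "connected_graph V E" "u \<in> V" "v \<in> V" "u \<noteq> v"
  shows "gdist E u v \<ge> 1"
proof (rule ccontr)
  assume "\<not> gdist E u v \<ge> 1"
  then have "walk E u v 0" using walk_gdist[OF assms(1-3)] by (simp add: not_less_eq_eq)
  then show False using assms(4) by (cases rule: walk.cases) auto
qed

lemma gdist_le_diameter:
  assumes "finite V" "u \<in> V" "v \<in> V"
  shows "gdist E u v \<le> diameter V E"
proof -
  have "{gdist E u v | u v. u \<in> V \<and> v \<in> V} = (\<lambda>(u, v). gdist E u v) ` (V \<times> V)" by auto
  then show ?thesis unfolding diameter_def using assms by (intro Max_ge) auto
qed

definition transmission :: "'a set \<Rightarrow> ('a \<Rightarrow> 'a \<Rightarrow> bool) \<Rightarrow> (nat \<Rightarrow> real) \<Rightarrow> 'a \<Rightarrow> real" where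
  "transmission V E g u = (\<Sum>v\<in>V - {u}. g (gdist E u v))"

definition transmission_regular :: "'a set \<Rightarrow> ('a \<Rightarrow> 'a \<Rightarrow> bool) \<Rightarrow> (nat \<Rightarrow> real) \<Rightarrow> bool" where
  "transmission_regular V E g \<longleftrightarrow> (\<forall>u\<in>V. \<forall>w\<in>V. transmission V E g u = transmission V E g w)"

lemma sum_Diff_singleton_split:
  assumes "finite V" "A \<subseteq> V"
  shows "(\<Sum>u\<in>A. \<Sum>v\<in>V - {u}. h u v) = (\<Sum>u\<in>A. \<Sum>v\<in>A - {u}. h u v) + (\<Sum>u\<in>A. \<Sum>v\<in>V - A. h u v)"
proof -
  have "(\<Sum>v\<in>V - {u}. h u v) = (\<Sum>v\<in>A - {u}. h u v) + (\<Sum>v\<in>V - A. h u v)" if "u \<in> A" for u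
  proof -
    have "V - {u} = (A - {u}) \<union> (V - A)" "(A - {u}) \<inter> (V - A) = {}" using that assms(2) by auto
    moreover have "finite (A - {u})" "finite (V - A)" using assms finite_subset by auto
    ultimately show ?thesis by (simp add: sum.union_disjoint)
  qed
  then show ?thesis by (simp add: sum.distrib)
qed

lemma energy_diff_compl:
  assumes G: "simple_graph V E" and A: "A \<subseteq> V"
  shows "energy E g A - energy E g (V - A)
           = ((\<Sum>u\<in>A. transmission V E g u) - (\<Sum>u\<in>V - A. transmission V E g u)) / 2"
proof -
  define h where "h x y = g (gdist E x y)" for x y
  have fin: "finite V" using G by (rule simple_graph_finite)
  have "(\<Sum>u\<in>A. transmission V E g u) = 2 * energy E g A + (\<Sum>u\<in>A. \<Sum>v\<in>V - A. h u v)"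
    using sum_Diff_singleton_split[OF fin A, of h] unfolding transmission_def energy_def h_def by simp
  moreover have "(\<Sum>u\<in>V - A. transmission V E g u) = 2 * energy E g (V - A) + (\<Sum>u\<in>V - A. \<Sum>v\<in>A. h u v)"
    using sum_Diff_singleton_split[OF fin Diff_subset, of h] A double_diff[OF A subset_refl]
    unfolding transmission_def energy_def h_def by simp
  moreover have "(\<Sum>u\<in>A. \<Sum>v\<in>V - A. h u v) = (\<Sum>u\<in>V - A. \<Sum>v\<in>A. h u v)"
    unfolding h_def by (subst sum.swap) (simp add: gdist_sym[OF G])
  ultimately show ?thesis by simp
qed

lemma energy_eq_sum_transmission:
  "simple_graph V E \<Longrightarrow> energy E g V = (\<Sum>u\<in>V. transmission V E g u) / 2"
  using energy_diff_compl[of V E V g] by (simp add: energy_def)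

lemma energy_remove_vertex:
  assumes G: "simple_graph V E" and u: "u \<in> V"
  shows "energy E g V = transmission V E g u + energy E g (V - {u})"
proof -
  have "energy E g {u} = 0" by (simp add: energy_def)
  moreover have "(\<Sum>w\<in>V. transmission V E g w) = transmission V E g u + (\<Sum>w\<in>V - {u}. transmission V E g w)"
    using simple_graph_finite[OF G] u by (rule sum.remove)
  ultimately show ?thesis
    using energy_diff_compl[OF G, of "{u}" g] energy_eq_sum_transmission[OF G, of g] u by simp
qed

lemma energy_compl_identity:
  assumes G: "simple_graph V E" and T: "transmission_regular V E g" and A: "A \<subseteq> V" and n: "card V > 0"
  shows "energy E g A - energy E g (V - A) = (2 * real (card A) / real (card V) - 1) * energy E g V"
proof -
  obtain u where u: "u \<in> V" using n by fastforce
  define c where "c = transmission V E g u"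
  have t: "transmission V E g w = c" if "w \<in> V" for w
    using T that u unfolding transmission_regular_def c_def by blast
  have fin: "finite V" using G by (rule simple_graph_finite)
  have sum_t: "(\<Sum>w\<in>B. transmission V E g w) = c * real (card B)" if "B \<subseteq> V" for B
    using that t by (simp add: subset_iff)
  have "c * real (card (V - A)) = c * real (card V) - c * real (card A)"
    using A fin by (simp add: card_Diff_subset finite_subset card_mono of_nat_diff right_diff_distrib)
  then have diff: "energy E g A - energy E g (V - A) = c * real (card A) - c * real (card V) / 2"
    using energy_diff_compl[OF G A, of g] sum_t[OF A] sum_t[of "V - A"] by simp
  have eV: "energy E g V = c * real (card V) / 2"
    using energy_eq_sum_transmission[OF G, of g] sum_t[of V] by simp
  have "c * real (card A) - c * real (card V) / 2
          = (2 * real (card A) / real (card V) - 1) * (c * real (card V) / 2)"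
    using n by (simp add: field_simps)
  then show ?thesis unfolding eV diff .
qed

lemma transmission_eq_if_energy_compl_identity:
  assumes G: "simple_graph V E" and u: "u \<in> V"
    and I: "\<forall>A. A \<subseteq> V \<and> card A > 0 \<longrightarrow>
              energy E g A - energy E g (V - A) = (2 * real (card A) / real (card V) - 1) * energy E g V"
  shows "transmission V E g u = 2 * energy E g V / real (card V)"
proof -
  have n: "card V > 0" using simple_graph_finite[OF G] u card_gt_0_iff by blast
  have "energy E g {u} - energy E g (V - {u}) = (2 / real (card V) - 1) * energy E g V"
    using I u by auto
  then show ?thesis using energy_remove_vertex[OF G u, of g] n by (simp add: energy_def field_simps)
qed

definition sphere_size :: "'a set \<Rightarrow> ('a \<Rightarrow> 'a \<Rightarrow> bool) \<Rightarrow> 'a \<Rightarrow> nat \<Rightarrow> nat" where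
  "sphere_size V E u i = card {v \<in> V - {u}. gdist E u v = i}"

lemma count_distance_mset:
  assumes "finite V"
  shows "count (image_mset (gdist E u) (mset_set (V - {u}))) i = sphere_size V E u i"
proof -
  have "{x. x \<in># mset_set (V - {u}) \<and> i = gdist E u x} = {v \<in> V - {u}. gdist E u v = i}"
    using assms by auto
  then show ?thesis using assms unfolding count_image_mset' sphere_size_def by simp
qed

lemma distance_degree_regular_iff_sphere_size:
  assumes "finite V"
  shows "distance_degree_regular V E \<longleftrightarrow> (\<forall>u\<in>V. \<forall>w\<in>V. \<forall>i. sphere_size V E u i = sphere_size V E w i)"
proof -
  have "distance_vector V E u = distance_vector V E w \<longleftrightarrow> (\<forall>i. sphere_size V E u i = sphere_size V E w i)"
    for u w
  proof
    assume "distance_vector V E u = distance_vector V E w"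
    then have "image_mset (gdist E u) (mset_set (V - {u})) = image_mset (gdist E w) (mset_set (V - {w}))"
      unfolding distance_vector_def by (metis mset_sorted_list_of_multiset)
    then show "\<forall>i. sphere_size V E u i = sphere_size V E w i"
      by (metis count_distance_mset[OF assms])
  next
    assume "\<forall>i. sphere_size V E u i = sphere_size V E w i"
    then have "image_mset (gdist E u) (mset_set (V - {u})) = image_mset (gdist E w) (mset_set (V - {w}))"
      by (simp add: multiset_eq_iff count_distance_mset[OF assms])
    then show "distance_vector V E u = distance_vector V E w"
      unfolding distance_vector_def by simp
  qed
  then show ?thesis unfolding distance_degree_regular_def by blast
qed

lemma transmission_eq_sum_sphere_size:
  assumes G: "simple_graph V E" and C: "connected_graph V E" and u: "u \<in> V"
  shows "transmission V E g u = (\<Sum>i=1..diameter V E. real (sphere_size V E u i) * g i)"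
proof -
  have fin: "finite V" using G by (rule simple_graph_finite)
  have sub: "gdist E u ` (V - {u}) \<subseteq> {1..diameter V E}"
    using gdist_ge_1[OF C u] gdist_le_diameter[OF fin u] by (intro image_subsetI) auto
  have "transmission V E g u
      = (\<Sum>i=1..diameter V E. \<Sum>v\<in>{v \<in> V - {u}. gdist E u v = i}. g (gdist E u v))"
    unfolding transmission_def using sum.group[OF _ _ sub, of "\<lambda>v. g (gdist E u v)"] fin by simp
  also have "\<dots> = (\<Sum>i=1..diameter V E. real (sphere_size V E u i) * g i)"
    unfolding sphere_size_def by (intro sum.cong refl) simp
  finally show ?thesis .
qed

lemma sphere_size_beyond_diameter:
  assumes "connected_graph V E" "finite V" "u \<in> V" "i \<notin> {1..diameter V E}"
  shows "sphere_size V E u i = 0"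
proof -
  have "{v \<in> V - {u}. gdist E u v = i} = {}"
    using assms gdist_ge_1[of V E u] gdist_le_diameter[of V u _ E] by fastforce
  then show ?thesis unfolding sphere_size_def by (metis card.empty)
qed

lemma transmission_indicator:
  assumes "finite V"
  shows "transmission V E (\<lambda>k. if k = i then 1 else 0) u = real (sphere_size V E u i)"
proof -
  have "(\<Sum>v\<in>V - {u}. if gdist E u v = i then 1 else 0 :: real) = (\<Sum>v\<in>{v \<in> V - {u}. gdist E u v = i}. 1)"
    using assms by (simp only: sum.inter_filter finite_Diff)
  then show ?thesis unfolding transmission_def sphere_size_def by simp
qed

lemma transmission_regular_if_distance_degree_regular:
  assumes G: "simple_graph V E" and C: "connected_graph V E" and D: "distance_degree_regular V E"
  shows "transmission_regular V E g"
  unfolding transmission_regular_def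
proof (intro ballI)
  fix u w assume u: "u \<in> V" and w: "w \<in> V"
  have "\<forall>i. sphere_size V E u i = sphere_size V E w i"
    using D u w unfolding distance_degree_regular_iff_sphere_size[OF simple_graph_finite[OF G]] by blast
  then show "transmission V E g u = transmission V E g w"
    unfolding transmission_eq_sum_sphere_size[OF G C u] transmission_eq_sum_sphere_size[OF G C w] by simp
qed

lemma distance_degree_regular_if_transmission_regular:
  assumes "finite V" and "\<And>g. transmission_regular V E g"
  shows "distance_degree_regular V E"
  unfolding distance_degree_regular_iff_sphere_size[OF assms(1)]
proof (intro ballI allI)
  fix u w i assume "u \<in> V" "w \<in> V"
  then have "transmission V E (\<lambda>k. if k = i then 1 else 0) u = transmission V E (\<lambda>k. if k = i then 1 else 0) w"
    using assms(2) unfolding transmission_regular_def by blast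
  then show "sphere_size V E u i = sphere_size V E w i"
    unfolding transmission_indicator[OF assms(1)] by simp
qed

text \<open>The sphere sizes of two vertices give a rational relation among \<open>g 1, \<dots>, g D\<close>.\<close>
lemma distance_degree_regular_if_rat_lin_indep:
  assumes G: "simple_graph V E" and C: "connected_graph V E"
    and R: "rat_lin_indep (diameter V E) g" and T: "transmission_regular V E g"
  shows "distance_degree_regular V E"
  unfolding distance_degree_regular_iff_sphere_size[OF simple_graph_finite[OF G]]
proof (intro ballI allI)
  fix u w i assume u: "u \<in> V" and w: "w \<in> V"
  define c where "c j = real (sphere_size V E u j) - real (sphere_size V E w j)" for j
  have "(\<Sum>j=1..diameter V E. c j * g j) = transmission V E g u - transmission V E g w"
    unfolding transmission_eq_sum_sphere_size[OF G C u] transmission_eq_sum_sphere_size[OF G C w] c_def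
    by (simp only: left_diff_distrib sum_subtractf)
  also have "\<dots> = 0"
    using T u w unfolding transmission_regular_def by (metis diff_self)
  finally have "(\<Sum>j=1..diameter V E. c j * g j) = 0" .
  moreover have "\<forall>j\<in>{1..diameter V E}. c j \<in> \<rat>" unfolding c_def by (simp add: Rats_diff)
  ultimately have c0: "\<forall>j\<in>{1..diameter V E}. c j = 0"
    using R[unfolded rat_lin_indep_def, THEN spec[of _ c]] by blast
  show "sphere_size V E u i = sphere_size V E w i"
  proof (cases "i \<in> {1..diameter V E}")
    case True
    then show ?thesis using c0 unfolding c_def by simp
  next
    case False
    then show ?thesis using sphere_size_beyond_diameter[OF C simple_graph_finite[OF G]] u w by simp
  qed
qed

lemma distance_degree_regular_iff_energy_compl_identity:
  assumes G: "simple_graph V E" and C: "connected_graph V E"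
  shows "distance_degree_regular V E \<longleftrightarrow>
           (\<forall>g. \<forall>A. A \<subseteq> V \<and> card A > 0 \<longrightarrow>
              energy E g A - energy E g (V - A)
                = (2 * real (card A) / real (card V) - 1) * energy E g V)" (is "_ \<longleftrightarrow> ?identity")
proof
  assume "distance_degree_regular V E"
  moreover have "card V > 0" if "A \<subseteq> V" "card A > 0" for A :: "'a set"
    using that simple_graph_finite[OF G] card_mono[of V A] by linarith
  ultimately show ?identity
    using energy_compl_identity[OF G transmission_regular_if_distance_degree_regular[OF G C]] by blast
next
  assume ?identity
  then have "transmission_regular V E g" for g
    using transmission_eq_if_energy_compl_identity[OF G] unfolding transmission_regular_def by simp
  then show "distance_degree_regular V E"
    by (rule distance_degree_regular_if_transmission_regular[OF simple_graph_finite[OF G]])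
qed

lemma card_perturbation:
  assumes "B \<in> perturbations V E A" and "finite A"
  shows "card B = card A"
proof -
  obtain u v where B: "B = insert v (A - {u})" and u: "u \<in> A" and v: "v \<notin> A"
    using assms(1) unfolding perturbations_def by blast
  have "card B = Suc (card (A - {u}))" unfolding B using v assms(2) by (simp add: card_insert_disjoint)
  also have "\<dots> = card A" using card_Suc_Diff1[OF assms(2) u] .
  finally show ?thesis .
qed

lemma perturbation_subset: "B \<in> perturbations V E A \<Longrightarrow> A \<subseteq> V \<Longrightarrow> B \<subseteq> V"
  unfolding perturbations_def by auto

lemma perturbation_of_compl:
  assumes sym: "\<And>x y. E x y \<Longrightarrow> E y x" and B': "B' \<in> perturbations V E (V - A)"
  obtains B where "B \<in> perturbations V E A" and "B' = V - B"
proof -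
  obtain u v where B'_eq: "B' = ((V - A) - {u}) \<union> {v}" and "u \<in> V - A" "v \<in> V - (V - A)" "E u v"
    using B' unfolding perturbations_def by blast
  then have "(A - {v}) \<union> {u} \<in> perturbations V E A" and "B' = V - ((A - {v}) \<union> {u})"
    unfolding perturbations_def using sym by auto
  then show ?thesis using that by blast
qed

lemma perturbation_cosingleton:
  assumes "simple_graph V E" and "E u w"
  shows "V - {w} \<in> perturbations V E (V - {u})"
proof -
  have "u \<in> V" "w \<in> V" "u \<noteq> w" "E w u"
    using assms unfolding simple_graph_def by metis+
  moreover have "V - {w} = ((V - {u}) - {w}) \<union> {u}" using calculation by auto
  ultimately show ?thesis unfolding perturbations_def by blast
qed

lemma is_maximizer_iff_minimizer_uminus:
  "is_maximizer V E F A \<longleftrightarrow> is_minimizer V E (\<lambda>B. - F B) A"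
  unfolding is_maximizer_def is_minimizer_def by simp

lemma is_local_maximizer_iff_local_minimizer_uminus:
  "is_local_maximizer V E F A \<longleftrightarrow> is_local_minimizer V E (\<lambda>B. - F B) A"
  unfolding is_local_maximizer_def is_local_minimizer_def by simp

lemma is_minimizer_compl:
  assumes fin: "finite V" and shift: "\<And>X. X \<subseteq> V \<Longrightarrow> F (V - X) = F X + k (card X)"
    and min: "is_minimizer V E F A"
  shows "is_minimizer V E F (V - A)"
  unfolding is_minimizer_def
proof (intro conjI allI impI)
  have A: "A \<subseteq> V" using min unfolding is_minimizer_def by blast
  fix B assume "B \<subseteq> V \<and> card B = card (V - A)"
  then have B: "B \<subseteq> V" "card B = card V - card A"
    using A fin by (auto simp: card_Diff_subset finite_subset)
  then have "card (V - B) = card A"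
    using A fin by (simp add: card_Diff_subset finite_subset card_mono)
  then have "F A \<le> F (V - B)" using min unfolding is_minimizer_def by blast
  moreover have "F B = F (V - B) + k (card A)"
    using shift[of "V - B"] B \<open>card (V - B) = card A\<close> by (simp add: double_diff)
  ultimately show "F (V - A) \<le> F B" using shift[OF A] by simp
qed auto

lemma is_local_minimizer_compl:
  assumes sym: "\<And>x y. E x y \<Longrightarrow> E y x" and fin: "finite V"
    and shift: "\<And>X. X \<subseteq> V \<Longrightarrow> F (V - X) = F X + k (card X)"
    and min: "is_local_minimizer V E F A"
  shows "is_local_minimizer V E F (V - A)"
  unfolding is_local_minimizer_def
proof (intro conjI ballI)
  have A: "A \<subseteq> V" using min unfolding is_local_minimizer_def by blast
  fix B' assume "B' \<in> perturbations V E (V - A)"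
  then obtain B where B: "B \<in> perturbations V E A" and B': "B' = V - B"
    using perturbation_of_compl[where E = E, OF sym] by blast
  have "B \<subseteq> V" "card B = card A"
    using perturbation_subset[OF B A] card_perturbation[OF B] A fin finite_subset by auto
  moreover have "F A \<le> F B" using min B unfolding is_local_minimizer_def by blast
  ultimately show "F (V - A) \<le> F B'" using shift[OF A] shift[of B] B' by simp
qed auto

lemma energy_optimizer_compl:
  assumes G: "simple_graph V E" and T: "transmission_regular V E g" and n: "card V > 0"
    and Opt: "Opt \<in> {is_minimizer V E, is_local_minimizer V E, is_maximizer V E, is_local_maximizer V E}"
    and A: "Opt (energy E g) A"
  shows "Opt (energy E g) (V - A)"
proof -
  define k where "k a = (1 - 2 * real a / real (card V)) * energy E g V" for a
  have shift: "energy E g (V - X) = energy E g X + k (card X)" if "X \<subseteq> V" for X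
    using energy_compl_identity[OF G T that n] unfolding k_def by (simp add: algebra_simps)
  then have shift_uminus: "- energy E g (V - X) = - energy E g X + - k (card X)" if "X \<subseteq> V" for X
    using that by simp
  note fin = simple_graph_finite[OF G] and sym = simple_graph_sym[OF G]
  consider "Opt = is_minimizer V E" | "Opt = is_local_minimizer V E"
    | "Opt = is_maximizer V E" | "Opt = is_local_maximizer V E"
    using Opt by blast
  then show ?thesis
  proof cases
    case 1
    then show ?thesis using A is_minimizer_compl[where F = "energy E g" and k = k, OF fin shift] by simp
  next
    case 2
    then show ?thesis using A is_local_minimizer_compl[where E = E and F = "energy E g" and k = k, OF sym fin shift] by simp
  next
    case 3
    then show ?thesis using A is_minimizer_compl[where F = "\<lambda>B. - energy E g B" and k = "\<lambda>a. - k a", OF fin shift_uminus]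
      by (simp add: is_maximizer_iff_minimizer_uminus)
  next
    case 4
    then show ?thesis using A is_local_minimizer_compl[where E = E and F = "\<lambda>B. - energy E g B" and k = "\<lambda>a. - k a", OF sym fin shift_uminus]
      by (simp add: is_local_maximizer_iff_local_minimizer_uminus)
  qed
qed

lemma energy_optimal_singleton:
  assumes "Opt \<in> {is_minimizer V E, is_local_minimizer V E, is_maximizer V E, is_local_maximizer V E}"
    and "u \<in> V"
  shows "Opt (energy E g) {u}"
proof -
  have "energy E g B = 0" if "card B = 1" for B
    using that by (auto simp: energy_def card_1_singleton_iff)
  moreover have "card B = 1" if "B \<in> perturbations V E {u}" for B
    using card_perturbation[OF that] by simp
  ultimately show ?thesis using assms
    by (auto simp: is_minimizer_def is_maximizer_def is_local_minimizer_def is_local_maximizer_def)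
qed

lemma minimizer_cosingletons_eq:
  assumes fin: "finite V" and min: "\<And>x. x \<in> V \<Longrightarrow> is_minimizer V E F (V - {x})"
    and u: "u \<in> V" and w: "w \<in> V"
  shows "F (V - {u}) = F (V - {w})"
proof -
  have "F (V - {x}) \<le> F (V - {y})" if "x \<in> V" "y \<in> V" for x y
  proof -
    have "card (V - {y}) = card (V - {x})" using fin that by simp
    then show ?thesis using min[OF \<open>x \<in> V\<close>] unfolding is_minimizer_def by blast
  qed
  then show ?thesis using u w by (blast intro: order.antisym)
qed

lemma local_minimizer_cosingletons_eq:
  assumes G: "simple_graph V E" and C: "connected_graph V E"
    and min: "\<And>x. x \<in> V \<Longrightarrow> is_local_minimizer V E F (V - {x})"
    and u: "u \<in> V" and w: "w \<in> V"
  shows "F (V - {u}) = F (V - {w})"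
proof -
  have le: "F (V - {x}) \<le> F (V - {y})" if "E x y" for x y
    using min[of x] simple_graph_edge_in[OF G that] perturbation_cosingleton[OF G that]
    unfolding is_local_minimizer_def by blast
  have "F (V - {x}) = F (V - {y})" if "E x y" for x y
    using le[OF that] le[OF simple_graph_sym[OF G that]] by (rule order.antisym)
  then show ?thesis by (rule connected_graph_invariant[OF C _ u w])
qed

lemma transmission_regular_if_energy_optimizers_compl:
  assumes G: "simple_graph V E" and C: "connected_graph V E"
    and Opt: "Opt \<in> {is_minimizer V E, is_local_minimizer V E, is_maximizer V E, is_local_maximizer V E}"
    and H: "\<forall>A. Opt (energy E g) A \<longrightarrow> Opt (energy E g) (V - A)"
  shows "transmission_regular V E g"
  unfolding transmission_regular_def
proof (intro ballI)
  fix u w assume u: "u \<in> V" and w: "w \<in> V"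
  have opt: "Opt (energy E g) (V - {x})" if "x \<in> V" for x
    using H energy_optimal_singleton[OF Opt that] by blast
  note fin = simple_graph_finite[OF G]
  consider "Opt = is_minimizer V E" | "Opt = is_local_minimizer V E"
    | "Opt = is_maximizer V E" | "Opt = is_local_maximizer V E"
    using Opt by blast
  then have "energy E g (V - {u}) = energy E g (V - {w})"
  proof cases
    case 1
    show ?thesis by (rule minimizer_cosingletons_eq[OF fin _ u w]) (use 1 opt in simp)
  next
    case 2
    show ?thesis by (rule local_minimizer_cosingletons_eq[OF G C _ u w]) (use 2 opt in simp)
  next
    case 3
    have "- energy E g (V - {u}) = - energy E g (V - {w})"
      by (rule minimizer_cosingletons_eq[where F = "\<lambda>B. - energy E g B", OF fin _ u w])
        (use 3 opt in \<open>simp add: is_maximizer_iff_minimizer_uminus\<close>)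
    then show ?thesis by simp
  next
    case 4
    have "- energy E g (V - {u}) = - energy E g (V - {w})"
      by (rule local_minimizer_cosingletons_eq[where F = "\<lambda>B. - energy E g B", OF G C _ u w])
        (use 4 opt in \<open>simp add: is_local_maximizer_iff_local_minimizer_uminus\<close>)
    then show ?thesis by simp
  qed
  then show "transmission V E g u = transmission V E g w"
    using energy_remove_vertex[OF G u, of g] energy_remove_vertex[OF G w, of g] by linarith
qed

definition rat_span :: "nat \<Rightarrow> (nat \<Rightarrow> real) \<Rightarrow> real set" where
  "rat_span D g = {\<Sum>i=1..D. c i * g i | c. \<forall>i\<in>{1..D}. c i \<in> \<rat>}"

lemma countable_rat_span: "countable (rat_span D g)"
proof -
  have "rat_span D g \<subseteq> (\<lambda>c. \<Sum>i=1..D. c i * g i) ` (\<Pi>\<^sub>E i\<in>{1..D}. \<rat>)"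
  proof
    fix x assume "x \<in> rat_span D g"
    then obtain c where x: "x = (\<Sum>i=1..D. c i * g i)" and c: "\<forall>i\<in>{1..D}. c i \<in> \<rat>"
      unfolding rat_span_def by blast
    have "x = (\<Sum>i=1..D. restrict c {1..D} i * g i)" unfolding x by simp
    moreover have "restrict c {1..D} \<in> (\<Pi>\<^sub>E i\<in>{1..D}. \<rat>)" using c by simp
    ultimately show "x \<in> (\<lambda>c. \<Sum>i=1..D. c i * g i) ` (\<Pi>\<^sub>E i\<in>{1..D}. \<rat>)" by blast
  qed
  then show ?thesis by (rule countable_subset) (simp add: countable_PiE countable_rat)
qed

lemma rat_lin_indep_extend:
  assumes g: "rat_lin_indep D g" and y: "y \<notin> rat_span D g"
  shows "rat_lin_indep (Suc D) (g(Suc D := y))"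
  unfolding rat_lin_indep_def
proof (intro allI impI)
  fix c :: "nat \<Rightarrow> real"
  assume q: "\<forall>i\<in>{1..Suc D}. c i \<in> \<rat>" and z: "(\<Sum>i=1..Suc D. c i * (g(Suc D := y)) i) = 0"
  have z': "(\<Sum>i=1..D. c i * g i) + c (Suc D) * y = 0"
    using z by (simp add: sum.cong[OF refl, of "{1..D}" "\<lambda>i. c i * (g(Suc D := y)) i"])
  have "c (Suc D) = 0"
  proof (rule ccontr)
    assume nz: "c (Suc D) \<noteq> 0"
    have "y = (\<Sum>i=1..D. (- c i / c (Suc D)) * g i)"
      using z' nz by (simp add: sum_divide_distrib[symmetric] sum_negf field_simps)
    moreover have "\<forall>i\<in>{1..D}. - c i / c (Suc D) \<in> \<rat>" using q by (auto intro: Rats_divide)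
    ultimately have "y \<in> rat_span D g"
      unfolding rat_span_def by (intro CollectI exI[where x = "\<lambda>i. - c i / c (Suc D)"]) simp
    with y show False ..
  qed
  moreover have "\<forall>i\<in>{1..D}. c i = 0"
    using g[unfolded rat_lin_indep_def, THEN spec[of _ c]] q z' \<open>c (Suc D) = 0\<close> by simp
  ultimately show "\<forall>i\<in>{1..Suc D}. c i = 0" by (auto simp: le_Suc_eq)
qed

text \<open>The \<open>\<rat>\<close>-span of finitely many reals is countable, so it never exhausts \<open>\<real>\<close>.\<close>
lemma rat_lin_indep_exists: "\<exists>g. rat_lin_indep D g"
proof (induction D)
  case 0
  show ?case unfolding rat_lin_indep_def by simp
next
  case (Suc D)
  then obtain g where g: "rat_lin_indep D g" ..
  obtain y :: real where "y \<notin> rat_span D g"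
    using countable_rat_span[of D g] uncountable_UNIV_real by (metis UNIV_eq_I)
  then show ?case using rat_lin_indep_extend[OF g] by blast
qed

theorem mainTheorem9:
  fixes V :: "'a set" and E :: "'a \<Rightarrow> 'a \<Rightarrow> bool"
  assumes "simple_graph V E" and "connected_graph V E" and "card V \<ge> 2"
  defines "D \<equiv> diameter V E"
  shows "(distance_degree_regular V E \<longleftrightarrow>
           (\<forall>g :: nat \<Rightarrow> real. \<forall>A. A \<subseteq> V \<and> card A > 0 \<longrightarrow>
              energy E g A - energy E g (V - A)
                = (2 * real (card A) / real (card V) - 1) * energy E g V))
       \<and> (\<forall>Opt \<in> {is_minimizer V E, is_local_minimizer V E, is_maximizer V E, is_local_maximizer V E}.
            (distance_degree_regular V E \<longleftrightarrow>
               (\<forall>g :: nat \<Rightarrow> real. \<forall>A. Opt (energy E g) A \<longrightarrow> Opt (energy E g) (V - A)))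
          \<and> (distance_degree_regular V E \<longleftrightarrow>
               (\<exists>g :: nat \<Rightarrow> real. rat_lin_indep D g \<and>
                  (\<forall>A. Opt (energy E g) A \<longrightarrow> Opt (energy E g) (V - A)))))"
proof -
  note G = assms(1) and C = assms(2) and fin = simple_graph_finite[OF assms(1)]
  have n: "card V > 0" using assms(3) by linarith
  note regular = transmission_regular_if_distance_degree_regular[OF G C]
  define closed where "closed Opt g \<longleftrightarrow> (\<forall>A. Opt (energy E g) A \<longrightarrow> Opt (energy E g) (V - A))"
    for Opt :: "('a set \<Rightarrow> real) \<Rightarrow> 'a set \<Rightarrow> bool" and g :: "nat \<Rightarrow> real"
  have "(distance_degree_regular V E \<longleftrightarrow> (\<forall>g. closed Opt g))
      \<and> (distance_degree_regular V E \<longleftrightarrow> (\<exists>g. rat_lin_indep D g \<and> closed Opt g))"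
    if Opt: "Opt \<in> {is_minimizer V E, is_local_minimizer V E, is_maximizer V E, is_local_maximizer V E}"
    for Opt
  proof -
    have "closed Opt g" if "distance_degree_regular V E" for g
      unfolding closed_def using energy_optimizer_compl[OF G regular[OF that] n Opt] by blast
    moreover have "transmission_regular V E g" if "closed Opt g" for g
      using transmission_regular_if_energy_optimizers_compl[OF G C Opt] that unfolding closed_def .
    moreover obtain g0 where "rat_lin_indep D g0" using rat_lin_indep_exists by blast
    ultimately show ?thesis
      using distance_degree_regular_if_transmission_regular[OF fin]
        distance_degree_regular_if_rat_lin_indep[OF G C] unfolding D_def by metis
  qed
  then show ?thesis
    using distance_degree_regular_iff_energy_compl_identity[OF G C] unfolding closed_def by blast
qed

end
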